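(* For every positive integer $m$ and every complex number $\alpha \neq 0$, $$\sum_{k=1}^m \left[ {m \atop k} \right] k^\alpha = \sum_{j=1}^m j!\, S(\alpha, j) \left[ {m+1 \atop j+1} \right].$$
   Context: For a complex number $\alpha \neq 0$ and a positive integer $k$, the Stirling function of the second kind is $$S(\alpha, k) = \frac{1}{k!} \sum_{j=1}^k (-1)^{k-j} \binom{k}{j} j^\alpha,$$ where for a positive integer $j$, $j^\alpha = e^{\alpha \ln j}$ with $\ln j$ the real logarithm. For nonnegative integers $n,k$, $\left[ {n \atop k} \right]$ denotes the unsigned Stirling number of the first kind, i.e. the number of permutations of an $n$-element set with exactly $k$ cycles; equivalently $x(x+1)\cdots(x+n-1) = \sum_{k=0}^n \left[ {n \atop k} \right] x^k$. *)

theory Defs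
  imports Complex_Main "HOL-Combinatorics.Stirling"
begin

text \<open>j^alpha = e^(alpha ln j) for a positive integer j, ln the real logarithm.\<close>
definition npow :: "nat \<Rightarrow> complex \<Rightarrow> complex" where
  "npow j \<alpha> = exp (\<alpha> * complex_of_real (ln (real j)))"

definition StirlingS :: "complex \<Rightarrow> nat \<Rightarrow> complex" where
  "StirlingS \<alpha> k = (1 / of_nat (fact k)) *
     (\<Sum>j=1..k. (-1) ^ (k - j) * of_nat (k choose j) * npow j \<alpha>)"

end

theory Submission
  imports Defs
begin

(*
  The unsigned Stirling numbers of the first kind satisfy the
  triangular relation  [n+1, j+1] = sum_i [n, i] * (i choose j), whose binomial
  inverse is the identity
      sum_{j<=n} (-1)^(j+i) * (j choose i) * [n+1, j+1]  =  [n, i].        [INV]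
  We prove [INV] directly by induction on n from the recurrence of [n, k] and
  Pascal's rule.  Writing j! S(alpha, j) as the finite difference
  sum_{i=1..j} (-1)^(j-i) (j choose i) i^alpha, the right-hand side of the
  theorem becomes a double sum over 1 <= i <= j <= m; exchanging the order of
  summation and applying [INV] to the inner sum gives the left-hand side.
  Nothing about the function i |-> i^alpha is used: the identity holds for an
  arbitrary sequence f, which is the form in which it is proved below.
*)

lemma stirling_inversion:
  "(\<Sum>j\<le>n. (-1) ^ (j + i) * of_nat (j choose i) * of_nat (stirling (Suc n) (Suc j)))
     = (of_nat (stirling n i) :: 'a :: comm_ring_1)"
proof (induction n arbitrary: i)
  case 0
  then show ?case by (cases i) auto
next
  case (Suc n)
  define A :: "nat \<Rightarrow> nat \<Rightarrow> 'a" where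
    "A n i = (\<Sum>j\<le>n. (-1) ^ (j + i) * of_nat (j choose i) * of_nat (stirling (Suc n) (Suc j)))"
    for n i
  define B :: 'a where
    "B = (\<Sum>j\<le>n. (-1) ^ (Suc j + i) * of_nat (Suc j choose i) * of_nat (stirling (Suc n) (Suc j)))"
  text \<open>Split the recurrence  [n+2, j+1] = (n+1) [n+1, j+1] + [n+1, j].\<close>
  have recur: "A (Suc n) i = of_nat (Suc n) * A n i + B"
  proof -
    have "A (Suc n) i
        = (\<Sum>j\<le>Suc n. (-1) ^ (j + i) * of_nat (j choose i) * (of_nat (Suc n) * of_nat (stirling (Suc n) (Suc j))))
        + (\<Sum>j\<le>Suc n. (-1) ^ (j + i) * of_nat (j choose i) * of_nat (stirling (Suc n) j))"
      unfolding A_def by (simp add: sum.distrib[symmetric] algebra_simps)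
    also have "(\<Sum>j\<le>Suc n. (-1) ^ (j + i) * of_nat (j choose i) * (of_nat (Suc n) * of_nat (stirling (Suc n) (Suc j))))
        = of_nat (Suc n) * A n i"
      unfolding A_def by (simp add: sum_distrib_left algebra_simps)
    also have "(\<Sum>j\<le>Suc n. (-1) ^ (j + i) * of_nat (j choose i) * of_nat (stirling (Suc n) j)) = B"
      unfolding B_def by (subst sum.atMost_Suc_shift) simp
    finally show ?thesis .
  qed
  have IH: "A n k = of_nat (stirling n k)" for k
    using Suc.IH unfolding A_def .
  have "A (Suc n) i = of_nat (stirling (Suc n) i)"
  proof (cases i)
    case 0
    then have "B = - A n i"
      unfolding A_def B_def by (simp add: sum_negf[symmetric])
    then show ?thesis using recur 0 IH by (cases n) simp_all
  next
    case (Suc i')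
    text \<open>Pascal's rule splits  B  into two instances of the induction hypothesis.\<close>
    then have "B = A n i' - A n i"
      unfolding A_def B_def by (simp add: sum_subtractf[symmetric] algebra_simps)
    then show ?thesis using recur Suc IH by (simp add: algebra_simps)
  qed
  then show ?case unfolding A_def .
qed

text \<open>The form of [INV] needed below: summation over 1..m and the sign written
  as (-1)^(j-i), which agrees with (-1)^(j+i) whenever (j choose i) is nonzero.\<close>

lemma stirling_inversion_signed:
  assumes "1 \<le> i"
  shows "(\<Sum>j=1..m. (-1) ^ (j - i) * of_nat (j choose i) * of_nat (stirling (m + 1) (j + 1)))
       = (of_nat (stirling m i) :: 'a :: comm_ring_1)"
proof -
  have sign: "(-1 :: 'a) ^ (j - i) * of_nat (j choose i) = (-1) ^ (j + i) * of_nat (j choose i)" for j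
  proof (cases "i \<le> j")
    case True
    then have "j + i = (j - i) + 2 * i" by simp
    then show ?thesis by (simp only: power_add power_mult) simp
  qed (simp add: binomial_eq_0)
  have "{..m} = insert 0 {1..m}" by auto
  then have "(\<Sum>j=1..m. (-1) ^ (j - i) * of_nat (j choose i) * of_nat (stirling (m + 1) (j + 1)))
       = (\<Sum>j\<le>m. (-1) ^ (j + i) * of_nat (j choose i) * of_nat (stirling (Suc m) (Suc j)) :: 'a)"
    using assms by (simp add: sign binomial_eq_0)
  also have "\<dots> = of_nat (stirling m i)" by (rule stirling_inversion)
  finally show ?thesis .
qed

lemma stirling_sum_finite_differences:
  fixes f :: "nat \<Rightarrow> 'a :: comm_ring_1"
  shows "(\<Sum>k=1..m. of_nat (stirling m k) * f k)
       = (\<Sum>j=1..m. (\<Sum>i=1..j. (-1) ^ (j - i) * of_nat (j choose i) * f i)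
                     * of_nat (stirling (m + 1) (j + 1)))"
proof -
  have extend: "(\<Sum>i=1..j. (-1) ^ (j - i) * of_nat (j choose i) * f i)
      = (\<Sum>i=1..m. (-1) ^ (j - i) * of_nat (j choose i) * f i)" if "j \<le> m" for j
    (* the added terms have (j choose i) = 0 *)
    using that by (intro sum.mono_neutral_left) (auto simp: binomial_eq_0)
  have "(\<Sum>j=1..m. (\<Sum>i=1..j. (-1) ^ (j - i) * of_nat (j choose i) * f i) * of_nat (stirling (m + 1) (j + 1)))
      = (\<Sum>j=1..m. \<Sum>i=1..m. (-1) ^ (j - i) * of_nat (j choose i) * f i * of_nat (stirling (m + 1) (j + 1)))"
    by (intro sum.cong refl) (simp only: extend atLeastAtMost_iff sum_distrib_right)
  also have "\<dots> = (\<Sum>i=1..m. f i * (\<Sum>j=1..m. (-1) ^ (j - i) * of_nat (j choose i) * of_nat (stirling (m + 1) (j + 1))))"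
    by (subst sum.swap) (simp add: sum_distrib_left algebra_simps)
  also have "\<dots> = (\<Sum>i=1..m. f i * of_nat (stirling m i))"
    by (intro sum.cong refl) (simp only: atLeastAtMost_iff stirling_inversion_signed)
  finally show ?thesis by (simp add: mult.commute)
qed

theorem proposition3:
  fixes m :: nat and \<alpha> :: complex
  assumes "m \<ge> 1" and "\<alpha> \<noteq> 0"
  shows "(\<Sum>k=1..m. of_nat (stirling m k) * npow k \<alpha>)
       = (\<Sum>j=1..m. of_nat (fact j) * StirlingS \<alpha> j * of_nat (stirling (m + 1) (j + 1)))"
proof -
  have difference: "of_nat (fact j) * StirlingS \<alpha> j
      = (\<Sum>i=1..j. (-1) ^ (j - i) * of_nat (j choose i) * npow i \<alpha>)" for j
    unfolding StirlingS_def by simp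
  show ?thesis
    unfolding difference by (rule stirling_sum_finite_differences)
qed

end
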